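(* Let $\Lambda$ be an integral lattice in an $n$-dimensional Euclidean space whose minimum $m$ is even. Let $x_0\in\Lambda$ with $N(x_0)=2m-2$, and let $\mathcal E=\{\pm y_1,\dots,\pm y_k\}$ be the set of all vectors $y\in\Lambda$ with $N(y)=2m+2$ and $y-x_0\in 2\Lambda$. Then the lines $\mathbb R y_1,\dots,\mathbb R y_k$ form an equiangular family of lines with common angle $\arccos\frac{1}{m+1}$ (equivalently $|y_i\cdot y_j|=2$ for all $i\neq j$), and the linear span of $\mathcal E$ has dimension at most $n-1$. (Families consisting of fewer than three lines are allowed.)
   Context: $N(x)=x\cdot x$ is the norm of $x$. A lattice $\Lambda$ is integral if $x\cdot y\in\mathbb Z$ for all $x,y\in\Lambda$. The minimum of $\Lambda$ is the smallest norm of a nonzero vector of $\Lambda$. A family of lines is equiangular with common angle $\theta$ if any two distinct lines in it make the angle $\theta$. *)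

theory Defs
  imports "HOL-Analysis.Analysis"
begin

definition lattice :: "'a::euclidean_space set \<Rightarrow> bool" where
  "lattice L \<longleftrightarrow> (\<exists>B. independent B \<and> span B = UNIV \<and>
     L = {x. \<exists>c. (\<forall>b\<in>B. c b \<in> \<int>) \<and> x = (\<Sum>b\<in>B. c b *\<^sub>R b)})"

definition norm_sq :: "'a::euclidean_space \<Rightarrow> real" ("N") where
  "N x = x \<bullet> x"

definition integral_lattice :: "'a::euclidean_space set \<Rightarrow> bool" where
  "integral_lattice L \<longleftrightarrow> lattice L \<and> (\<forall>x\<in>L. \<forall>y\<in>L. x \<bullet> y \<in> \<int>)"

definition lattice_min :: "'a::euclidean_space set \<Rightarrow> real" where
  "lattice_min L = Inf {N x | x. x \<in> L \<and> x \<noteq> 0}"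

definition line_angle :: "'a::euclidean_space \<Rightarrow> 'a \<Rightarrow> real" where
  "line_angle y z = arccos (\<bar>y \<bullet> z\<bar> / (norm y * norm z))"

definition equiangular_lines :: "'a::euclidean_space set \<Rightarrow> real \<Rightarrow> bool" where
  "equiangular_lines Y \<theta> \<longleftrightarrow> (0 \<notin> Y \<and>
     (\<forall>y\<in>Y. \<forall>z\<in>Y. span {y} \<noteq> span {z} \<longrightarrow> line_angle y z = \<theta>))"

end

theory Submission
  imports Defs
begin

text \<open>
  Every y of norm 2m + 2 in the class x0 + 2L can be written y = x0 + 2w with w in L, so that
  N y = N x0 + 4 (x0 \<bullet> w) + 4 N w. The minimum, applied to w and to w + x0 = (y + x0)/2,
  forces N w = m and x0 \<bullet> w = 1 - m; hence x0 \<bullet> y = 0, and x0 is nonzero because m is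
  even, so these vectors lie in a hyperplane. For a second vector z = x0 + 2w' one gets
  y \<bullet> z = 4 (w \<bullet> w') - 2m + 2, and the minimum, applied to w - w' and to
  w + w' + x0 = (y + z)/2, confines the integer w \<bullet> w' to {m/2 - 1, m/2}, whence
  y \<bullet> z = 2 or y \<bullet> z = -2.
\<close>

lemma lattice_add:
  assumes "lattice L" "x \<in> L" "y \<in> L"
  shows "x + y \<in> L"
proof -
  obtain B where L: "L = {x. \<exists>c. (\<forall>b\<in>B. c b \<in> \<int>) \<and> x = (\<Sum>b\<in>B. c b *\<^sub>R b)}"
    using assms(1) unfolding lattice_def by blast
  obtain c d where "\<forall>b\<in>B. c b \<in> \<int>" "x = (\<Sum>b\<in>B. c b *\<^sub>R b)"
    and "\<forall>b\<in>B. d b \<in> \<int>" "y = (\<Sum>b\<in>B. d b *\<^sub>R b)"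
    using assms(2,3) L by blast
  then have "(\<forall>b\<in>B. c b + d b \<in> \<int>) \<and> x + y = (\<Sum>b\<in>B. (c b + d b) *\<^sub>R b)"
    by (simp add: scaleR_add_left sum.distrib)
  then show ?thesis
    unfolding L by (intro CollectI exI[of _ "\<lambda>b. c b + d b"])
qed

lemma lattice_uminus:
  assumes "lattice L" "x \<in> L"
  shows "- x \<in> L"
proof -
  obtain B where L: "L = {x. \<exists>c. (\<forall>b\<in>B. c b \<in> \<int>) \<and> x = (\<Sum>b\<in>B. c b *\<^sub>R b)}"
    using assms(1) unfolding lattice_def by blast
  obtain c where "\<forall>b\<in>B. c b \<in> \<int>" "x = (\<Sum>b\<in>B. c b *\<^sub>R b)"
    using assms(2) L by blast
  then have "(\<forall>b\<in>B. - c b \<in> \<int>) \<and> - x = (\<Sum>b\<in>B. (- c b) *\<^sub>R b)"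
    by (simp add: sum_negf)
  then show ?thesis
    unfolding L by (intro CollectI exI[of _ "\<lambda>b. - c b"])
qed

lemma lattice_diff:
  assumes "lattice L" "x \<in> L" "y \<in> L"
  shows "x - y \<in> L"
  using lattice_add[OF assms(1,2) lattice_uminus[OF assms(1,3)]] by simp

lemma lattice_min_le_norm_sq:
  assumes "x \<in> L" "x \<noteq> 0"
  shows "lattice_min L \<le> N x"
  unfolding lattice_min_def
proof (rule cInf_lower)
  show "N x \<in> {N x | x. x \<in> L \<and> x \<noteq> 0}"
    using assms by blast
  show "bdd_below {N x | x. x \<in> L \<and> x \<noteq> 0}"
    by (rule bdd_belowI[where m = 0]) (auto simp: norm_sq_def)
qed

lemma span_singleton_uminus: "span {- x} = span {x}"
proof (rule subset_antisym)
  show "span {- x} \<subseteq> span {x}"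
    by (intro span_minimal) (auto intro: span_neg span_base)
  show "span {x} \<subseteq> span {- x}"
    using span_neg[OF span_base[of "- x" "{- x}"]] by (intro span_minimal) auto
qed

lemma equiangular_linesI:
  fixes Y :: "'a::euclidean_space set"
  assumes "c > 0" and norm_Y: "\<And>y. y \<in> Y \<Longrightarrow> N y = c"
    and inner_Y: "\<And>y z. y \<in> Y \<Longrightarrow> z \<in> Y \<Longrightarrow> z \<noteq> y \<Longrightarrow> z \<noteq> - y \<Longrightarrow> \<bar>y \<bullet> z\<bar> = d"
  shows "equiangular_lines Y (arccos (d / c))"
  unfolding equiangular_lines_def
proof (intro conjI ballI impI)
  show "0 \<notin> Y"
  proof
    assume "0 \<in> Y"
    then have "N (0::'a) = c"
      by (rule norm_Y)
    then show False
      using \<open>c > 0\<close> by (simp add: norm_sq_def)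
  qed
next
  fix y z
  assume yz: "y \<in> Y" "z \<in> Y" "span {y} \<noteq> span {z}"
  then have "z \<noteq> y" "z \<noteq> - y"
    using span_singleton_uminus[of y] by auto
  then have "\<bar>y \<bullet> z\<bar> = d"
    using inner_Y yz(1,2) by blast
  moreover have "norm y * norm z = c"
    using norm_Y[OF yz(1)] norm_Y[OF yz(2)] \<open>c > 0\<close> by (simp add: norm_eq_sqrt_inner norm_sq_def)
  ultimately show "line_angle y z = arccos (d / c)"
    unfolding line_angle_def by simp
qed

lemma dim_le_orthogonal:
  fixes a :: "'a::euclidean_space"
  assumes "a \<noteq> 0" "\<And>x. x \<in> S \<Longrightarrow> a \<bullet> x = 0"
  shows "dim S \<le> DIM('a) - 1"
proof -
  have "S \<subseteq> {x. a \<bullet> x = 0}"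
    using assms(2) by blast
  then show ?thesis
    using dim_subset dim_hyperplane[OF assms(1)] by metis
qed

lemma inner_add_scaleR_2:
  fixes x w w' :: "'a::real_inner"
  shows "(x + 2 *\<^sub>R w) \<bullet> (x + 2 *\<^sub>R w') = x \<bullet> x + 2 * (x \<bullet> w) + 2 * (x \<bullet> w') + 4 * (w \<bullet> w')"
  by (simp add: inner_add_left inner_add_right inner_commute algebra_simps)

locale lattice_class_setting =
  fixes L :: "'a::euclidean_space set" and m :: real and x0 :: 'a and E :: "'a set"
  assumes lattice: "lattice L"
    and min_bound: "\<And>x. x \<in> L \<Longrightarrow> x \<noteq> 0 \<Longrightarrow> m \<le> N x"
    and x0_in: "x0 \<in> L" and norm_sq_x0: "N x0 = 2 * m - 2"
    and E_def: "E = {y \<in> L. N y = 2 * m + 2 \<and> y - x0 \<in> (*\<^sub>R) 2 ` L}"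
begin

lemma min_bound_ge_1: "1 \<le> m"
  using inner_ge_zero[of x0] norm_sq_x0 unfolding norm_sq_def by simp

lemma norm_sq_E: "y \<in> E \<Longrightarrow> N y = 2 * m + 2"
  unfolding E_def by blast

lemma E_decomp:
  assumes "y \<in> E"
  obtains w where "w \<in> L" "y = x0 + 2 *\<^sub>R w" "N w = m" "x0 \<bullet> w = 1 - m"
proof -
  obtain w where w: "w \<in> L" "y - x0 = 2 *\<^sub>R w"
    using assms unfolding E_def by blast
  have y: "y = x0 + 2 *\<^sub>R w"
    using w(2) by (simp add: algebra_simps)
  have norm_y: "x0 \<bullet> x0 + 4 * (x0 \<bullet> w) + 4 * (w \<bullet> w) = 2 * m + 2"
    using norm_sq_E[OF assms] inner_add_scaleR_2[of x0 w w] unfolding y norm_sq_def by simp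
  have "w \<noteq> 0"
    using norm_sq_E[OF assms] norm_sq_x0 y by auto
  then have "m \<le> w \<bullet> w"
    using min_bound[OF w(1)] by (simp add: norm_sq_def)
  moreover have "w + x0 \<noteq> 0"
  proof
    assume "w + x0 = 0"
    then have "y = - x0"
      unfolding y by (simp add: scaleR_2 eq_neg_iff_add_eq_0 algebra_simps)
    then show False
      using norm_sq_E[OF assms] norm_sq_x0 by (simp add: norm_sq_def)
  qed
  then have "m \<le> (w + x0) \<bullet> (w + x0)"
    using min_bound lattice_add[OF lattice w(1) x0_in] by (simp add: norm_sq_def)
  moreover have "(w + x0) \<bullet> (w + x0) = w \<bullet> w + 2 * (x0 \<bullet> w) + x0 \<bullet> x0"
    by (simp add: inner_add_left inner_add_right inner_commute)
  ultimately have "N w = m" "x0 \<bullet> w = 1 - m"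
    using norm_y norm_sq_x0 unfolding norm_sq_def by linarith+
  with w(1) y show thesis
    using that by blast
qed

lemma E_orthogonal: "y \<in> E \<Longrightarrow> x0 \<bullet> y = 0"
  by (erule E_decomp) (use norm_sq_x0 in \<open>simp add: inner_add_right norm_sq_def\<close>)

lemma inner_E_bounds:
  assumes "y \<in> E" "z \<in> E" "z \<noteq> y" "z \<noteq> - y"
  obtains w w' where "w \<in> L" "w' \<in> L" "y \<bullet> z = 4 * (w \<bullet> w') - 2 * m + 2"
    "m \<le> 2 * (w \<bullet> w') + 2" "2 * (w \<bullet> w') \<le> m"
proof -
  obtain w w' where w: "w \<in> L" "y = x0 + 2 *\<^sub>R w" "N w = m" "x0 \<bullet> w = 1 - m"
    and w': "w' \<in> L" "z = x0 + 2 *\<^sub>R w'" "N w' = m" "x0 \<bullet> w' = 1 - m"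
    using E_decomp[OF assms(1)] E_decomp[OF assms(2)] by metis
  have "y \<bullet> z = 4 * (w \<bullet> w') - 2 * m + 2"
    using w w' norm_sq_x0 by (simp add: inner_add_scaleR_2 norm_sq_def)
  moreover
  have "w - w' \<noteq> 0"
    using w(2) w'(2) assms(3) by auto
  then have "m \<le> (w - w') \<bullet> (w - w')"
    using min_bound lattice_diff[OF lattice w(1) w'(1)] by (simp add: norm_sq_def)
  moreover have "(w - w') \<bullet> (w - w') = w \<bullet> w + w' \<bullet> w' - 2 * (w \<bullet> w')"
    by (simp add: inner_diff_left inner_diff_right inner_commute)
  moreover
  have "y + z = 2 *\<^sub>R (w + w' + x0)"
    by (simp add: w(2) w'(2) algebra_simps scaleR_2)
  then have "w + w' + x0 \<noteq> 0"
    using assms(4) by (auto simp: eq_neg_iff_add_eq_0 add.commute)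
  then have "m \<le> (w + w' + x0) \<bullet> (w + w' + x0)"
    using min_bound lattice_add[OF lattice lattice_add[OF lattice w(1) w'(1)] x0_in]
    by (simp add: norm_sq_def)
  moreover have "(w + w' + x0) \<bullet> (w + w' + x0)
      = w \<bullet> w + w' \<bullet> w' + x0 \<bullet> x0 + 2 * (w \<bullet> w') + 2 * (x0 \<bullet> w) + 2 * (x0 \<bullet> w')"
    by (simp add: inner_add_left inner_add_right inner_commute)
  ultimately have "m \<le> 2 * (w \<bullet> w') + 2" "2 * (w \<bullet> w') \<le> m"
    using w w' norm_sq_x0 unfolding norm_sq_def by linarith+
  with \<open>y \<bullet> z = 4 * (w \<bullet> w') - 2 * m + 2\<close> show thesis
    using that[OF w(1) w'(1)] by blast
qed

lemma abs_inner_E_eq_2: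
  assumes integral: "\<And>a b. a \<in> L \<Longrightarrow> b \<in> L \<Longrightarrow> a \<bullet> b \<in> \<int>" and m: "m = 2 * of_int j"
    and "y \<in> E" "z \<in> E" "z \<noteq> y" "z \<noteq> - y"
  shows "\<bar>y \<bullet> z\<bar> = 2"
proof -
  obtain w w' where w: "w \<in> L" "w' \<in> L" and yz: "y \<bullet> z = 4 * (w \<bullet> w') - 2 * m + 2"
    and bounds: "m \<le> 2 * (w \<bullet> w') + 2" "2 * (w \<bullet> w') \<le> m"
    using inner_E_bounds[OF assms(3-6)] by blast
  obtain k where k: "w \<bullet> w' = of_int k"
    using integral[OF w] Ints_cases by metis
  have "k = j - 1 \<or> k = j"
    using bounds unfolding k m by linarith
  then show ?thesis
    using yz unfolding k m by auto
qed

end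

theorem theorem1p3:
  fixes L :: "'a::euclidean_space set" and m :: int and x0 :: 'a
  assumes "integral_lattice L"
    and "of_int m = lattice_min L"
    and "even m"
    and "x0 \<in> L" and "N x0 = 2 * of_int m - 2"
  defines "E \<equiv> {y \<in> L. N y = 2 * of_int m + 2 \<and> y - x0 \<in> ((*\<^sub>R) 2) ` L}"
  shows "equiangular_lines E (arccos (1 / (of_int m + 1)))
     \<and> (\<forall>y\<in>E. \<forall>z\<in>E. z \<noteq> y \<and> z \<noteq> - y \<longrightarrow> \<bar>y \<bullet> z\<bar> = 2)
     \<and> dim E \<le> DIM('a) - 1"
proof -
  interpret lattice_class_setting L "of_int m" x0 E
    using assms lattice_min_le_norm_sq by unfold_locales (auto simp: integral_lattice_def)
  obtain j where j: "m = 2 * j"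
    using \<open>even m\<close> by blast
  have inner_E: "\<bar>y \<bullet> z\<bar> = 2" if "y \<in> E" "z \<in> E" "z \<noteq> y" "z \<noteq> - y" for y z
    using abs_inner_E_eq_2[OF _ _ that] assms(1) j unfolding integral_lattice_def by simp
  have "equiangular_lines E (arccos (2 / (2 * of_int m + 2)))"
    using min_bound_ge_1 norm_sq_E inner_E by (intro equiangular_linesI) auto
  moreover have "2 / (2 * of_int m + 2) = 1 / (of_int m + 1 :: real)"
    using min_bound_ge_1 by (simp add: field_simps)
  moreover have "m \<noteq> 1"
    using j by presburger
  then have "x0 \<noteq> 0"
    using norm_sq_x0 by (auto simp: norm_sq_def)
  then have "dim E \<le> DIM('a) - 1"
    using E_orthogonal by (rule dim_le_orthogonal)
  ultimately show ?thesis
    using inner_E by auto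
qed

end
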